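(* Let $p\ge1$ and $q\ge2$ be integers and $m=p+q-1$. For integers $r\ge1$ and $s$ put $F_r(s)=\binom{2r-s-1}{r-1}$. Then for every $j\in[1,m]$, \[ \binom{2m-j-1}{m-1}=A(j)+B(j)+C(j), \] where \[ A(j)=\sum_{\substack{s\in[1,p],\ t\in[1,q-1]\\ s+t=j}}F_p(s)F_{q-1}(t),\qquad B(j)=\sum_{s=j}^{p}\sum_{t=1}^{q-1}F_p(s)F_{q-1}(t)\binom{s+t-j-1}{s-j}, \] \[ C(j)=\sum_{s=1}^{p}\sum_{t=j}^{q-1}F_p(s)F_{q-1}(t)\binom{s+t-j-1}{s-1} \] (empty sums are $0$).
   Context: $[1,n]=\{1,\dots,n\}$; binomial coefficients are the usual ones for non-negative arguments. *)

theory Defs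
  imports Main
begin

text \<open>F r s = binom(2r - s - 1, r - 1). Used only for 1 <= s <= r, where all
  arguments are genuinely non-negative, so natural-number subtraction is exact.\<close>
definition F :: "nat \<Rightarrow> nat \<Rightarrow> nat" where
  "F r s = (2 * r - s - 1) choose (r - 1)"

end

theory Submission
  imports Defs
begin

text \<open>Let \<open>multichoose r k\<close> count the \<open>k\<close>-element multisets over \<open>r\<close> elements, so that
  \<open>F r s = multichoose r (r - s)\<close>. With \<open>n = q - 1\<close>, the left-hand side is
  \<open>multichoose (p + n) (m - j)\<close>, which the multiset Vandermonde convolution expands as
  \<open>\<Sum>i \<le> m - j. multichoose p i * multichoose n (m - j - i)\<close>. The same convolution collapses
  the inner sums of \<open>B(j)\<close> and \<open>C(j)\<close> to single products, and then \<open>B(j)\<close>, \<open>A(j)\<close> and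
  \<open>C(j)\<close> are exactly the parts of the expansion with \<open>i \<le> p - j\<close>, \<open>p - j < i < p\<close> and
  \<open>p \<le> i\<close>.\<close>

definition multichoose :: "nat \<Rightarrow> nat \<Rightarrow> nat" where
  "multichoose r k = (r + k - 1) choose k"

lemma multichoose_0_left: "multichoose 0 k = (if k = 0 then 1 else 0)"
  by (simp add: multichoose_def binomial_eq_0)

lemma multichoose_Suc: "multichoose (Suc a) b = (a + b) choose a"
proof -
  have "(a + b) choose b = (a + b) choose a"
    using binomial_symmetric[of b "a + b"] by (simp only: le_add2 add_diff_cancel_right')
  then show ?thesis by (simp add: multichoose_def add.commute)
qed

lemma multichoose_Suc_commute: "multichoose (Suc a) b = multichoose (Suc b) a"
  using multichoose_Suc[of a b] by (simp add: multichoose_def add.commute)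

lemma F_eq_multichoose: "s \<le> r \<Longrightarrow> F r s = multichoose r (r - s)"
  by (cases r) (auto simp: F_def multichoose_Suc multichoose_0_left intro: arg_cong2[where f = "(choose)"])

lemma sum_choose_mult_choose_diff:
  "(\<Sum>k\<le>N. (k choose a) * ((N - k) choose b)) = Suc N choose Suc (a + b)"
proof (induction N arbitrary: b)
  case 0
  then show ?case by (cases a; cases b; simp)
next
  case (Suc N)
  show ?case
  proof (cases b)
    case 0
    then show ?thesis using sum_choose_upper[of a "Suc N"] by simp
  next
    case (Suc b')
    have "(\<Sum>k\<le>Suc N. (k choose a) * ((Suc N - k) choose b))
        = (\<Sum>k\<le>N. (k choose a) * ((Suc N - k) choose b))"
      using Suc by simp
    also have "\<dots> = (\<Sum>k\<le>N. (k choose a) * ((N - k) choose b') + (k choose a) * ((N - k) choose b))"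
      by (rule sum.cong) (auto simp: Suc Suc_diff_le algebra_simps)
    also have "\<dots> = (Suc N choose Suc (a + b')) + (Suc N choose Suc (a + b))"
      by (simp add: sum.distrib Suc.IH)
    also have "\<dots> = Suc (Suc N) choose Suc (a + b)"
      using Suc by simp
    finally show ?thesis .
  qed
qed

lemma multichoose_convolution:
  "(\<Sum>i\<le>L. multichoose a i * multichoose b (L - i)) = multichoose (a + b) L"
proof (cases "a = 0 \<or> b = 0")
  case True
  then show ?thesis
  proof
    assume "a = 0"
    then have "(\<Sum>i\<le>L. multichoose a i * multichoose b (L - i))
        = (\<Sum>i\<le>L. if i = 0 then multichoose b (L - i) else 0)"
      by (intro sum.cong) (auto simp: multichoose_0_left)
    with \<open>a = 0\<close> show ?thesis by simp
  next
    assume "b = 0"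
    then have "(\<Sum>i\<le>L. multichoose a i * multichoose b (L - i))
        = (\<Sum>i\<le>L. if i = L then multichoose a i else 0)"
      by (intro sum.cong) (auto simp: multichoose_0_left)
    with \<open>b = 0\<close> show ?thesis by simp
  qed
next
  case False
  then obtain a' b' where a: "a = Suc a'" and b: "b = Suc b'"
    by (metis not0_implies_Suc)
  define N where "N = a' + b' + L"
  have "(\<Sum>i\<le>L. multichoose a i * multichoose b (L - i))
      = (\<Sum>i\<le>L. ((a' + i) choose a') * ((N - (a' + i)) choose b'))"
    by (intro sum.cong) (auto simp: a b N_def multichoose_Suc)
  also have "\<dots> = (\<Sum>k\<in>{a'..a' + L}. (k choose a') * ((N - k) choose b'))"
    by (rule sum.reindex_bij_witness[where i = "\<lambda>k. k - a'" and j = "\<lambda>i. a' + i"]) auto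
  also have "\<dots> = (\<Sum>k\<le>N. (k choose a') * ((N - k) choose b'))"
    by (rule sum.mono_neutral_left) (auto simp: N_def binomial_eq_0)
  also have "\<dots> = Suc N choose Suc (a' + b')"
    by (rule sum_choose_mult_choose_diff)
  also have "\<dots> = Suc N choose L"
    using binomial_symmetric[of "Suc (a' + b')" "Suc N"] by (simp add: N_def)
  finally show ?thesis
    by (simp add: a b N_def multichoose_def)
qed

lemma sum_F_mult_choose:
  assumes "1 \<le> r"
  shows "(\<Sum>s = 1..r. F r s * ((d + s - 1) choose d)) = multichoose r (r + d)"
proof -
  have "(\<Sum>s = 1..r. F r s * ((d + s - 1) choose d))
      = (\<Sum>k\<le>r - 1. multichoose r k * multichoose (Suc d) (r - 1 - k))"
    by (rule sum.reindex_bij_witness[where i = "\<lambda>k. r - k" and j = "\<lambda>s. r - s"])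
      (use assms in \<open>auto simp: F_eq_multichoose multichoose_Suc\<close>)
  also have "\<dots> = multichoose (Suc (r + d)) (r - 1)"
    using multichoose_convolution[where L = "r - 1" and a = r and b = "Suc d"] by simp
  also have "\<dots> = multichoose r (r + d)"
    using assms multichoose_Suc_commute[of "r + d" "r - 1"] by simp
  finally show ?thesis .
qed

lemma sum_F_first_tail:
  assumes "1 \<le> n"
  shows "(\<Sum>s = j..p. \<Sum>t = 1..n. F p s * F n t * ((s + t - j - 1) choose (s - j)))
    = (\<Sum>i < Suc p - j. multichoose p i * multichoose n (p + n - j - i))"
proof -
  have inner: "(\<Sum>t = 1..n. F p s * F n t * ((s + t - j - 1) choose (s - j)))
      = multichoose p (p - s) * multichoose n (n + (s - j))" if "j \<le> s" "s \<le> p" for s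
  proof -
    have "(\<Sum>t = 1..n. F n t * ((s + t - j - 1) choose (s - j)))
        = (\<Sum>t = 1..n. F n t * ((s - j + t - 1) choose (s - j)))"
      using that by (intro sum.cong) auto
    also have "\<dots> = multichoose n (n + (s - j))"
      by (rule sum_F_mult_choose[OF assms])
    finally show ?thesis
      using that by (simp add: sum_distrib_left[symmetric] mult.assoc F_eq_multichoose)
  qed
  have "(\<Sum>s = j..p. \<Sum>t = 1..n. F p s * F n t * ((s + t - j - 1) choose (s - j)))
      = (\<Sum>s = j..p. multichoose p (p - s) * multichoose n (n + (s - j)))"
    by (rule sum.cong[OF refl]) (rule inner; simp)
  also have "\<dots> = (\<Sum>i < Suc p - j. multichoose p i * multichoose n (p + n - j - i))"
    by (rule sum.reindex_bij_witness[where i = "\<lambda>i. p - i" and j = "\<lambda>s. p - s"])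
      (auto intro!: arg_cong2[where f = multichoose])
  finally show ?thesis .
qed

lemma sum_F_second_tail:
  assumes "1 \<le> p"
  shows "(\<Sum>s = 1..p. \<Sum>t = j..n. F p s * F n t * ((s + t - j - 1) choose (s - 1)))
    = (\<Sum>i = p..p + n - j. multichoose p i * multichoose n (p + n - j - i))"
proof -
  have inner: "(\<Sum>s = 1..p. F p s * F n t * ((s + t - j - 1) choose (s - 1)))
      = multichoose p (p + (t - j)) * multichoose n (n - t)" if "j \<le> t" "t \<le> n" for t
  proof -
    have "(s + t - j - 1) choose (s - 1) = (t - j + s - 1) choose (t - j)" if "1 \<le> s" for s
    proof -
      have "t - j + s - 1 = s + t - j - 1"
        using that \<open>j \<le> t\<close> by simp
      then show ?thesis
        using binomial_symmetric[of "s - 1" "s + t - j - 1"] that \<open>j \<le> t\<close> by simp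
    qed
    then have "(\<Sum>s = 1..p. F p s * ((s + t - j - 1) choose (s - 1)))
        = (\<Sum>s = 1..p. F p s * ((t - j + s - 1) choose (t - j)))"
      by (intro sum.cong) auto
    also have "\<dots> = multichoose p (p + (t - j))"
      by (rule sum_F_mult_choose[OF assms])
    finally show ?thesis
      using that by (simp add: sum_distrib_left[symmetric] mult_ac F_eq_multichoose)
  qed
  have "(\<Sum>s = 1..p. \<Sum>t = j..n. F p s * F n t * ((s + t - j - 1) choose (s - 1)))
      = (\<Sum>t = j..n. \<Sum>s = 1..p. F p s * F n t * ((s + t - j - 1) choose (s - 1)))"
    by (rule sum.swap)
  also have "\<dots> = (\<Sum>t = j..n. multichoose p (p + (t - j)) * multichoose n (n - t))"
    by (rule sum.cong[OF refl]) (rule inner; simp)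
  also have "\<dots> = (\<Sum>i = p..p + n - j. multichoose p i * multichoose n (p + n - j - i))"
    by (rule sum.reindex_bij_witness[where i = "\<lambda>i. i + j - p" and j = "\<lambda>t. p + t - j"])
      (use assms in \<open>auto intro!: arg_cong2[where f = multichoose]\<close>)
  finally show ?thesis .
qed

lemma sum_F_diagonal:
  "(\<Sum>(s, t) \<in> {(s, t). s \<in> {1..p} \<and> t \<in> {1..n} \<and> s + t = j}. F p s * F n t)
    = (\<Sum>i \<in> {i. p < i + j \<and> i < p \<and> i + j \<le> p + n}.
        multichoose p i * multichoose n (p + n - j - i))"
  by (rule sum.reindex_bij_witness[where i = "\<lambda>i. (p - i, i + j - p)" and j = "\<lambda>(s, t). p - s"])
    (auto simp: F_eq_multichoose intro!: arg_cong2[where f = multichoose])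

lemma sum_atMost_split_convolution_ranges:
  assumes "1 \<le> j" "j \<le> p + n"
  shows "sum f {..p + n - j} = sum f {..<Suc p - j}
    + sum f {i. p < i + j \<and> i < p \<and> i + j \<le> p + n} + sum f {p..p + n - j}"
proof -
  let ?P = "{i. p < i + j \<and> i < p \<and> i + j \<le> p + n}"
  have "{..p + n - j} = ({..<Suc p - j} \<union> ?P) \<union> {p..p + n - j}"
    using assms by auto
  moreover have "finite ?P"
    by (rule finite_subset[of _ "{..p}"]) auto
  ultimately show ?thesis
    using assms by (subst sum.union_disjoint[symmetric]; auto)+
qed

theorem lemma5:
  fixes p q m j :: nat
  assumes "p \<ge> 1" and "q \<ge> 2" and "m = p + q - 1"
    and "j \<in> {1..m}"
  shows "(2 * m - j - 1) choose (m - 1) =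
      (\<Sum>(s, t) \<in> {(s, t). s \<in> {1..p} \<and> t \<in> {1..q - 1} \<and> s + t = j}.
          F p s * F (q - 1) t)
    + (\<Sum>s = j..p. \<Sum>t = 1..q - 1. F p s * F (q - 1) t * ((s + t - j - 1) choose (s - j)))
    + (\<Sum>s = 1..p. \<Sum>t = j..q - 1. F p s * F (q - 1) t * ((s + t - j - 1) choose (s - 1)))"
proof -
  define n where "n = q - 1"
  have n: "1 \<le> n" and m: "m = p + n" and j: "1 \<le> j" "j \<le> p + n"
    using assms by (auto simp: n_def)
  let ?conv = "\<lambda>i. multichoose p i * multichoose n (p + n - j - i)"
  have "m - 1 \<le> 2 * m - j - 1" and "2 * m - j - 1 - (m - 1) = m - j"
    using j m by simp_all
  then have "(2 * m - j - 1) choose (m - 1) = (2 * m - j - 1) choose (m - j)"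
    by (metis binomial_symmetric)
  also have "\<dots> = multichoose (p + n) (p + n - j)"
    using j m by (simp add: multichoose_def mult_2 add_ac)
  also have "\<dots> = sum ?conv {..p + n - j}"
    by (rule multichoose_convolution[symmetric])
  also have "\<dots> = sum ?conv {..<Suc p - j}
      + sum ?conv {i. p < i + j \<and> i < p \<and> i + j \<le> p + n} + sum ?conv {p..p + n - j}"
    by (rule sum_atMost_split_convolution_ranges[OF j])
  also have "\<dots> = (\<Sum>(s, t) \<in> {(s, t). s \<in> {1..p} \<and> t \<in> {1..n} \<and> s + t = j}. F p s * F n t)
      + (\<Sum>s = j..p. \<Sum>t = 1..n. F p s * F n t * ((s + t - j - 1) choose (s - j)))
      + (\<Sum>s = 1..p. \<Sum>t = j..n. F p s * F n t * ((s + t - j - 1) choose (s - 1)))"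
    unfolding sum_F_diagonal sum_F_first_tail[OF n] sum_F_second_tail[OF assms(1)] by simp
  finally show ?thesis
    unfolding n_def .
qed

end
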